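(* Assume $\|\hat F'(y)-\hat F'(x)\|_F\le L_{\hat F}\|y-x\|$ for all $x,y\in\mathcal F$ and $\sigma_{\min}(\hat F'(x)^* )\ge\sqrt\mu$ for all $x\in\mathcal F$, some $\mu>0$. Then for the sequence $\{x_k\}$ generated by Scheme 2: $$\hat f_1(x_{k+1})\le\varepsilon_k+\begin{cases}\frac{L_{\hat F}}{\mu}\hat f_2(x_k)\le\frac12\hat f_1(x_k),&\text{if }\hat f_1(x_k)\le\frac{\mu}{2L_{\hat F}},\\ \hat f_1(x_k)-\frac{\mu}{4L_{\hat F}},&\text{otherwise}.\end{cases}$$ If $L_k=L_{\hat F}$ is fixed while generating the sequence, then $$\hat f_1(x_{k+1})\le\varepsilon_k+\begin{cases}\frac{L_{\hat F}}{2\mu}\hat f_2(x_k)\le\frac12\hat f_1(x_k),&\text{if }\hat f_1(x_k)\le\frac{\mu}{L_{\hat F}},\\ \hat f_1(x_k)-\frac{\mu}{2L_{\hat F}},&\text{otherwise}.\end{cases}$$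
   Context: Let $F:\mathbb R^n\to\mathbb R^m$ be smooth, $\hat F=\frac1{\sqrt m}F$ with Jacobian $\hat F'(x)$ and transpose $\hat F'(x)^*$; Euclidean norms, $\|\cdot\|_F$ Frobenius norm. $\hat f_1(x)=\|\hat F(x)\|$, $\hat f_2=\hat f_1^2$, $\phi(x,y)=\|\hat F(x)+\hat F'(x)(y-x)\|$, $\psi_{x,L,\tau}(y)=\frac\tau2+\frac{\phi(x,y)^2}{2\tau}+\frac L2\|y-x\|^2$, $T_{L,\tau}(x)=\arg\min_y\psi_{x,L,\tau}(y)$, $\mathcal T_L(x)=\arg\min_{\tau>0}\psi_{x,L,\tau}(T_{L,\tau}(x))$. $\mathcal F$ closed convex with nonempty interior, $\mathcal L(\hat f_1(x_0))\subseteq\mathcal F$ and the generated sequence stays in $\mathcal F$. Scheme 2 (input $x_0$; a rule choosing $\varepsilon_k\ge0$; $L\in(0,L_{\hat F}]$, $L_0=L$; a map $\mathcal X(x,L,\tau)$ approximating $T_{L,\tau}(x)$). For $k=0,1,\dots$: choose $\varepsilon_k$; find $\tau_k^*>0$ with $\psi_{x_k,L_k,\tau_k^*}(\mathcal X(x_k,L_k,\tau_k^* ))-\psi_{x_k,L_k,\mathcal T_{L_k}(x_k)}(T_{L_k,\mathcal T_{L_k}(x_k)}(x_k))\le\varepsilon_k$ and $\hat f_1(x_k)\ge\psi_{x_k,L_k,\tau_k^*}(\mathcal X(x_k,L_k,\tau_k^* ))$; set $x_{k+1}=\mathcal X(x_k,L_k,\tau_k^* )$; if $\hat f_1(x_{k+1})>\psi_{x_k,L_k,\tau_k^*}(x_{k+1})$,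 set $L_k:=\min\{2L_k,2L_{\hat F}\}$ and redo the search for $\tau_k^*$; otherwise $L_{k+1}=\max\{L_k/2,L\}$. *)

theory Defs
  imports "HOL-Analysis.Analysis"
begin

text \<open>F : R^n -> R^m is given by F, its Jacobian (an m x n matrix) by J.\<close>

definition Fhat :: "(real^'n \<Rightarrow> real^'m) \<Rightarrow> real^'n \<Rightarrow> real^'m" where
  "Fhat F x = (1 / sqrt (real CARD('m))) *\<^sub>R F x"

definition Jhat :: "(real^'n \<Rightarrow> real^'n^'m) \<Rightarrow> real^'n \<Rightarrow> real^'n^'m" where
  "Jhat J x = (1 / sqrt (real CARD('m))) *\<^sub>R J x"

definition f1 :: "(real^'n \<Rightarrow> real^'m) \<Rightarrow> real^'n \<Rightarrow> real" where
  "f1 F x = norm (Fhat F x)"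

definition f2 :: "(real^'n \<Rightarrow> real^'m) \<Rightarrow> real^'n \<Rightarrow> real" where
  "f2 F x = (f1 F x)^2"

definition frob_norm :: "real^'n^'m \<Rightarrow> real" where
  "frob_norm A = sqrt (\<Sum>i\<in>UNIV. \<Sum>j\<in>UNIV. (A $ i $ j)^2)"

text \<open>Smallest singular value of a linear map A : R^m -> R^n (used for A = Fhat'(x)^*):
  the minimum of |A v| over unit vectors v.\<close>
definition sigma_min :: "real^'m^'n \<Rightarrow> real" where
  "sigma_min A = Inf {norm (A *v v) | v. norm v = 1}"

definition phi :: "(real^'n \<Rightarrow> real^'m) \<Rightarrow> (real^'n \<Rightarrow> real^'n^'m) \<Rightarrow> real^'n \<Rightarrow> real^'n \<Rightarrow> real" where
  "phi F J x y = norm (Fhat F x + Jhat J x *v (y - x))"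

definition psi :: "(real^'n \<Rightarrow> real^'m) \<Rightarrow> (real^'n \<Rightarrow> real^'n^'m) \<Rightarrow> real^'n \<Rightarrow> real \<Rightarrow> real \<Rightarrow> real^'n \<Rightarrow> real" where
  "psi F J x L \<tau> y = \<tau> / 2 + (phi F J x y)^2 / (2 * \<tau>) + L / 2 * (norm (y - x))^2"

definition Tmap :: "(real^'n \<Rightarrow> real^'m) \<Rightarrow> (real^'n \<Rightarrow> real^'n^'m) \<Rightarrow> real \<Rightarrow> real \<Rightarrow> real^'n \<Rightarrow> real^'n" where
  "Tmap F J L \<tau> x = (ARG_MIN (psi F J x L \<tau>) y. True)"

text \<open>The optimal value psi_{x,L,T_L(x)}(T_{L,T_L(x)}(x)) = min over tau > 0 of
  psi_{x,L,tau}(T_{L,tau}(x)); written as an infimum (it need not be attained when the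
  linearized residual can vanish).\<close>
definition opt_val :: "(real^'n \<Rightarrow> real^'m) \<Rightarrow> (real^'n \<Rightarrow> real^'n^'m) \<Rightarrow> real \<Rightarrow> real^'n \<Rightarrow> real" where
  "opt_val F J L x = (INF \<tau>\<in>{0<..}. psi F J x L \<tau> (Tmap F J L \<tau> x))"

definition tau_ok :: "(real^'n \<Rightarrow> real^'m) \<Rightarrow> (real^'n \<Rightarrow> real^'n^'m)
    \<Rightarrow> (real^'n \<Rightarrow> real \<Rightarrow> real \<Rightarrow> real^'n) \<Rightarrow> real^'n \<Rightarrow> real \<Rightarrow> real \<Rightarrow> real \<Rightarrow> bool" where
  "tau_ok F J X x Lk \<epsilon> \<tau> \<longleftrightarrow> \<tau> > 0
     \<and> psi F J x Lk \<tau> (X x Lk \<tau>) - opt_val F J Lk x \<le> \<epsilon>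
     \<and> f1 F x \<ge> psi F J x Lk \<tau> (X x Lk \<tau>)"

text \<open>A run of Scheme 2.  Lstart k is the value of L_k at the beginning of iteration k,
  j k the number of doublings performed in iteration k, Lacc k the accepted value of L_k,
  \<tau> k the accepted tau_k^*, \<epsilon> k the chosen epsilon_k.\<close>
definition scheme2 ::
  "(real^'n \<Rightarrow> real^'m) \<Rightarrow> (real^'n \<Rightarrow> real^'n^'m) \<Rightarrow> (real^'n \<Rightarrow> real \<Rightarrow> real \<Rightarrow> real^'n)
   \<Rightarrow> real \<Rightarrow> real \<Rightarrow> (nat \<Rightarrow> real^'n) \<Rightarrow> (nat \<Rightarrow> real) \<Rightarrow> (nat \<Rightarrow> real) \<Rightarrow> (nat \<Rightarrow> nat)
   \<Rightarrow> (nat \<Rightarrow> real) \<Rightarrow> (nat \<Rightarrow> real) \<Rightarrow> bool" where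
  "scheme2 F J X L LF x \<epsilon> Lstart j Lacc \<tau> \<longleftrightarrow>
     0 < L \<and> L \<le> LF \<and>
     Lstart 0 = L \<and>
     (\<forall>k. \<epsilon> k \<ge> 0) \<and>
     (\<forall>k. Lacc k = min (2 ^ j k * Lstart k) (2 * LF)) \<and>
     (\<forall>k. Lstart (Suc k) = max (Lacc k / 2) L) \<and>
     (\<forall>k. \<forall>i < j k. \<exists>\<tau>'. tau_ok F J X (x k) (min (2 ^ i * Lstart k) (2 * LF)) (\<epsilon> k) \<tau>'
            \<and> f1 F (X (x k) (min (2 ^ i * Lstart k) (2 * LF)) \<tau>')
                > psi F J (x k) (min (2 ^ i * Lstart k) (2 * LF)) \<tau>'
                      (X (x k) (min (2 ^ i * Lstart k) (2 * LF)) \<tau>')) \<and>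
     (\<forall>k. tau_ok F J X (x k) (Lacc k) (\<epsilon> k) (\<tau> k)) \<and>
     (\<forall>k. x (Suc k) = X (x k) (Lacc k) (\<tau> k)) \<and>
     (\<forall>k. f1 F (x (Suc k)) \<le> psi F J (x k) (Lacc k) (\<tau> k) (x (Suc k)))"

end

theory Submission
  imports Defs
begin

text \<open>Minimising \<open>\<psi>\<close> over \<open>\<tau>\<close> recovers the model value \<open>\<phi>(x,y) + L/2 \<parallel>y - x\<parallel>\<^sup>2\<close>, because
  \<open>min\<^sub>\<tau> (\<tau>/2 + a\<^sup>2/(2\<tau>)) = a\<close>.  Since \<open>\<sigma>\<^sub>m\<^sub>i\<^sub>n(F'(x)\<^sup>*) \<ge> \<surd>\<mu>\<close>, the Gauss-Newton equation
  \<open>F'(x) d = -F(x)\<close> has a solution with \<open>\<parallel>d\<parallel> \<le> f\<^sub>1(x)/\<surd>\<mu>\<close>; testing \<open>y = x + t d\<close> bounds the model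
  by \<open>(1 - t) f\<^sub>1 + L\<^sub>k t\<^sup>2 f\<^sub>1\<^sup>2/(2\<mu>)\<close>.  The accuracy of the \<open>\<tau>\<close>-search and the acceptance test carry
  this bound over to \<open>f\<^sub>1(x\<^sub>k\<^sub>+\<^sub>1)\<close> up to \<open>\<epsilon>\<^sub>k\<close>, and with \<open>L\<^sub>k \<le> 2L\<^sub>F\<close> the choices \<open>t = 1\<close> and
  \<open>t = \<mu>/(2L\<^sub>F f\<^sub>1)\<close> give the two cases; for \<open>L\<^sub>k = L\<^sub>F\<close> the same computation runs with \<open>L\<^sub>F/2\<close>.
  The Lipschitz bound on the Jacobian only serves to make the doubling of \<open>L\<^sub>k\<close> stop at the
  acceptance test with \<open>L\<^sub>k \<le> 2L\<^sub>F\<close>; a run of the scheme records both facts, so the estimate itself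
  needs only the singular value bound.\<close>

lemma sigma_min_le_norm_mult:
  fixes A :: "real^'m^'n"
  assumes "sigma_min A \<ge> s"
  shows "s * norm w \<le> norm (A *v w)"
proof (cases "w = 0")
  case True
  then show ?thesis by simp
next
  case False
  let ?v = "(1 / norm w) *\<^sub>R w"
  have "bdd_below {norm (A *v v) | v. norm v = 1}"
    by (rule bdd_belowI[of _ 0]) auto
  moreover have "norm ?v = 1"
    using False by simp
  ultimately have "sigma_min A \<le> norm (A *v ?v)"
    unfolding sigma_min_def by (intro cInf_lower) auto
  then have "s \<le> norm (A *v ?v)"
    using assms by simp
  also have "A *v ?v = (1 / norm w) *\<^sub>R (A *v w)"
    by (simp add: matrix_vector_mult_scaleR)
  finally show ?thesis
    using False by (simp add: field_simps)
qed

text \<open>The solution is \<open>d = A\<^sup>T w\<close> with \<open>A A\<^sup>T w = b\<close>; then \<open>\<parallel>d\<parallel>\<^sup>2 = w \<bullet> b \<le> \<parallel>w\<parallel> \<parallel>b\<parallel> \<le> \<parallel>d\<parallel> \<parallel>b\<parallel> / s\<close>.\<close>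

lemma sigma_min_transpose_exists_solution:
  fixes A :: "real^'n^'m" and b :: "real^'m"
  assumes sigma: "sigma_min (transpose A) \<ge> s" and "s > 0"
  shows "\<exists>d. A *v d = b \<and> norm d \<le> norm b / s"
proof -
  have lower: "s * norm w \<le> norm (transpose A *v w)" for w
    using sigma_min_le_norm_mult[OF sigma] .
  define g where "g w = A *v (transpose A *v w)" for w
  have "linear g"
    unfolding g_def by (intro linear_compose[OF matrix_vector_mul_linear matrix_vector_mul_linear,
        unfolded o_def])
  have g_inner: "w \<bullet> g w = (norm (transpose A *v w))\<^sup>2" for w
    unfolding g_def power2_norm_eq_inner
    by (metis dot_lmul_matrix inner_commute vector_transpose_matrix)
  have "inj g"
  proof (rule linear_injective_0[OF \<open>linear g\<close>, THEN iffD2], intro allI impI)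
    fix w
    assume "g w = 0"
    then have "s * norm w \<le> 0"
      using g_inner[of w] lower[of w] by simp
    then show "w = 0"
      using \<open>s > 0\<close> by (simp add: mult_le_0_iff)
  qed
  then obtain w where w: "g w = b"
    using linear_inj_imp_surj[OF \<open>linear g\<close>] by (metis surjD)
  define d where "d = transpose A *v w"
  have "(norm d)\<^sup>2 = w \<bullet> b"
    using g_inner[of w] w unfolding d_def by simp
  also have "\<dots> \<le> norm w * norm b"
    by (rule norm_cauchy_schwarz)
  also have "\<dots> \<le> norm d / s * norm b"
    using lower[of w] \<open>s > 0\<close> unfolding d_def by (intro mult_right_mono) (simp_all add: field_simps)
  finally have "norm d * norm d \<le> norm b / s * norm d"
    by (simp add: power2_eq_square mult.commute)
  then have "norm d \<le> norm b / s"
    using \<open>s > 0\<close> by (cases "norm d = 0") (auto intro: mult_right_le_imp_le)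
  moreover have "A *v d = b"
    using w unfolding g_def d_def .
  ultimately show ?thesis
    by blast
qed

lemma psi_nonneg: "\<tau> > 0 \<Longrightarrow> L \<ge> 0 \<Longrightarrow> psi F J x L \<tau> y \<ge> 0"
  unfolding psi_def by (intro add_nonneg_nonneg) auto

lemma continuous_on_psi: "continuous_on S (psi F J x L \<tau>)"
  unfolding psi_def phi_def divide_inverse
  by (intro continuous_intros matrix_vector_mult_linear_continuous_on[THEN continuous_on_compose2])
    auto

text \<open>Outside the ball of radius \<open>R\<close> the proximal term alone exceeds \<open>\<psi>(x)\<close>, so a minimiser over
  the compact ball is a global one.\<close>

lemma psi_attains_min:
  assumes "L > 0" "\<tau> > 0"
  shows "\<exists>y0. \<forall>y. psi F J x L \<tau> y0 \<le> psi F J x L \<tau> y"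
proof -
  let ?p = "psi F J x L \<tau>"
  define R where "R = 1 + (phi F J x x)\<^sup>2 / (\<tau> * L)"
  have "R \<ge> 1"
    unfolding R_def using assms by simp
  have "cball x R \<noteq> {}"
    using \<open>R \<ge> 1\<close> by simp
  then obtain y0 where min_ball: "\<forall>y\<in>cball x R. ?p y0 \<le> ?p y"
    using continuous_attains_inf[OF compact_cball _ continuous_on_psi] by blast
  have "?p y0 \<le> ?p y" for y
  proof (cases "y \<in> cball x R")
    case True
    then show ?thesis using min_ball by blast
  next
    case False
    then have "R \<le> norm (y - x) * norm (y - x)"
      using \<open>R \<ge> 1\<close> mult_mono[of R "norm (y - x)" 1 "norm (y - x)"]
      by (simp add: dist_norm norm_minus_commute)
    then have "(phi F J x x)\<^sup>2 / (\<tau> * L) \<le> (norm (y - x))\<^sup>2"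
      unfolding R_def by (simp add: power2_eq_square)
    then have "(phi F J x x)\<^sup>2 / (2 * \<tau>) \<le> L / 2 * (norm (y - x))\<^sup>2"
      using assms by (simp add: field_simps)
    moreover have "?p y0 \<le> ?p x"
      using min_ball \<open>R \<ge> 1\<close> by simp
    moreover have "(phi F J x y)\<^sup>2 / (2 * \<tau>) \<ge> 0"
      using assms by simp
    ultimately show ?thesis
      unfolding psi_def by simp
  qed
  then show ?thesis by blast
qed

lemma psi_Tmap_le:
  assumes "L > 0" "\<tau> > 0"
  shows "psi F J x L \<tau> (Tmap F J L \<tau> x) \<le> psi F J x L \<tau> y"
proof -
  obtain y0 where "\<forall>y. psi F J x L \<tau> y0 \<le> psi F J x L \<tau> y"
    using psi_attains_min[OF assms] by blast
  then have "is_arg_min (psi F J x L \<tau>) (\<lambda>y. True) y0"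
    unfolding is_arg_min_def by (simp add: not_less)
  then have "is_arg_min (psi F J x L \<tau>) (\<lambda>y. True) (Tmap F J L \<tau> x)"
    unfolding Tmap_def arg_min_def by (rule someI)
  then show ?thesis
    unfolding is_arg_min_def by (simp add: not_less)
qed

text \<open>For \<open>a > 0\<close> take \<open>\<tau> = a\<close>; for \<open>a = 0\<close> let \<open>\<tau> \<rightarrow> 0\<close>.\<close>

lemma le_add_if_le_am_gm_bound:
  fixes v a c :: real
  assumes "a \<ge> 0" and bound: "\<And>\<tau>. \<tau> > 0 \<Longrightarrow> v \<le> \<tau> / 2 + a\<^sup>2 / (2 * \<tau>) + c"
  shows "v \<le> a + c"
proof (cases "a = 0")
  case True
  have "v \<le> c + e" if "e > 0" for e
    using bound[of "2 * e"] that True by simp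
  then show ?thesis
    using True by (simp add: field_le_epsilon)
next
  case False
  then show ?thesis
    using bound[of a] \<open>a \<ge> 0\<close> by (simp add: power2_eq_square)
qed

lemma opt_val_le_model:
  assumes "L > 0"
  shows "opt_val F J L x \<le> phi F J x y + L / 2 * (norm (y - x))\<^sup>2"
proof (rule le_add_if_le_am_gm_bound)
  show "phi F J x y \<ge> 0"
    unfolding phi_def by simp
  fix \<tau> :: real
  assume "\<tau> > 0"
  have "bdd_below ((\<lambda>\<tau>. psi F J x L \<tau> (Tmap F J L \<tau> x)) ` {0<..})"
    using assms by (intro bdd_belowI[of _ 0]) (auto intro!: psi_nonneg)
  then have "opt_val F J L x \<le> psi F J x L \<tau> (Tmap F J L \<tau> x)"
    unfolding opt_val_def using \<open>\<tau> > 0\<close> by (intro cInf_lower) auto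
  also have "\<dots> \<le> psi F J x L \<tau> y"
    using assms \<open>\<tau> > 0\<close> by (rule psi_Tmap_le)
  finally show "opt_val F J L x \<le> \<tau> / 2 + (phi F J x y)\<^sup>2 / (2 * \<tau>) + L / 2 * (norm (y - x))\<^sup>2"
    unfolding psi_def .
qed

lemma opt_val_le_gauss_newton:
  assumes "L > 0" "\<mu> > 0" "sigma_min (transpose (Jhat J x)) \<ge> sqrt \<mu>" "t \<in> {0..1}"
  shows "opt_val F J L x \<le> (1 - t) * f1 F x + L / 2 * t\<^sup>2 * ((f1 F x)\<^sup>2 / \<mu>)"
proof -
  obtain d where d: "Jhat J x *v d = - Fhat F x" "norm d \<le> f1 F x / sqrt \<mu>"
    using sigma_min_transpose_exists_solution[OF assms(3)] assms(2) unfolding f1_def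
    by (metis norm_minus_cancel real_sqrt_gt_0_iff)
  have "Fhat F x + Jhat J x *v (x + t *\<^sub>R d - x) = (1 - t) *\<^sub>R Fhat F x"
    using d(1) by (simp add: matrix_vector_mult_scaleR algebra_simps)
  then have phi_eq: "phi F J x (x + t *\<^sub>R d) = (1 - t) * f1 F x"
    unfolding phi_def f1_def using assms(4) by simp
  have "(norm d)\<^sup>2 \<le> (f1 F x / sqrt \<mu>)\<^sup>2"
    using d(2) by (intro power_mono) auto
  then have "t\<^sup>2 * (norm d)\<^sup>2 \<le> t\<^sup>2 * ((f1 F x)\<^sup>2 / \<mu>)"
    using assms(2) by (intro mult_left_mono) (simp_all add: power_divide)
  then have step_sq: "(norm (x + t *\<^sub>R d - x))\<^sup>2 \<le> t\<^sup>2 * ((f1 F x)\<^sup>2 / \<mu>)"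
    using assms(4) by (simp add: power_mult_distrib)
  have "opt_val F J L x \<le> phi F J x (x + t *\<^sub>R d) + L / 2 * (norm (x + t *\<^sub>R d - x))\<^sup>2"
    by (rule opt_val_le_model[OF assms(1)])
  also have "\<dots> \<le> (1 - t) * f1 F x + L / 2 * (t\<^sup>2 * ((f1 F x)\<^sup>2 / \<mu>))"
    unfolding phi_eq using assms(1) by (intro add_left_mono mult_left_mono step_sq) simp
  finally show ?thesis
    by (simp add: mult.assoc)
qed

text \<open>Minimising the bound over \<open>t\<close>: \<open>t = 1\<close> when \<open>f \<le> \<mu>/(2M)\<close>, and \<open>t = \<mu>/(2Mf)\<close> otherwise.\<close>

lemma quadratic_model_decrease:
  fixes v e f \<mu> M :: real
  assumes "f \<ge> 0" "\<mu> > 0" "M > 0"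
    and bound: "\<And>t. t \<in> {0..1} \<Longrightarrow> v \<le> e + (1 - t) * f + M * t\<^sup>2 * (f\<^sup>2 / \<mu>)"
  shows "if f \<le> \<mu> / (2 * M) then v \<le> e + M / \<mu> * f\<^sup>2 \<and> M / \<mu> * f\<^sup>2 \<le> f / 2
         else v \<le> e + (f - \<mu> / (4 * M))"
proof (cases "f \<le> \<mu> / (2 * M)")
  case True
  have "v \<le> e + M / \<mu> * f\<^sup>2"
    using bound[of 1] by simp
  moreover have "M * f * f \<le> \<mu> / 2 * f"
    using True \<open>M > 0\<close> \<open>f \<ge> 0\<close> by (intro mult_right_mono) (simp_all add: field_simps)
  then have "M / \<mu> * f\<^sup>2 \<le> f / 2"
    using \<open>\<mu> > 0\<close> by (simp add: field_simps power2_eq_square)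
  ultimately show ?thesis
    using True by simp
next
  case False
  then have "\<mu> < 2 * M * f"
    using \<open>M > 0\<close> by (simp add: field_simps)
  then have "f > 0"
    using \<open>\<mu> > 0\<close> \<open>M > 0\<close> \<open>f \<ge> 0\<close> by (cases "f = 0") auto
  define t where "t = \<mu> / (2 * M * f)"
  have "t \<in> {0..1}"
    unfolding t_def using \<open>\<mu> < 2 * M * f\<close> \<open>\<mu> > 0\<close> \<open>f > 0\<close> \<open>M > 0\<close> by auto
  then have "v \<le> e + (1 - t) * f + M * t\<^sup>2 * (f\<^sup>2 / \<mu>)"
    by (rule bound)
  also have "\<dots> = e + (f - \<mu> / (4 * M))"
    unfolding t_def using \<open>f > 0\<close> \<open>M > 0\<close> \<open>\<mu> > 0\<close> by (simp add: field_simps power2_eq_square)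
  finally show ?thesis
    using False by simp
qed

lemma scheme2_Lacc_bounds:
  assumes "scheme2 F J X L LF x \<epsilon> Lstart j Lacc \<tau>"
  shows "0 < Lacc k" "Lacc k \<le> 2 * LF"
proof -
  from assms have "0 < L" "L \<le> LF" "Lstart 0 = L"
    and Lacc: "Lacc k = min (2 ^ j k * Lstart k) (2 * LF)"
    and Lstart: "\<forall>k. Lstart (Suc k) = max (Lacc k / 2) L"
    unfolding scheme2_def by blast+
  have "L \<le> Lstart k"
    using \<open>Lstart 0 = L\<close> Lstart by (cases k) auto
  then show "0 < Lacc k"
    using \<open>0 < L\<close> \<open>L \<le> LF\<close> Lacc by (simp add: order_less_le_trans)
  show "Lacc k \<le> 2 * LF"
    using Lacc by simp
qed

lemma scheme2_f1_Suc_le_opt_val: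
  assumes "scheme2 F J X L LF x \<epsilon> Lstart j Lacc \<tau>"
  shows "f1 F (x (Suc k)) \<le> \<epsilon> k + opt_val F J (Lacc k) (x k)"
proof -
  from assms have "tau_ok F J X (x k) (Lacc k) (\<epsilon> k) (\<tau> k)"
    and "x (Suc k) = X (x k) (Lacc k) (\<tau> k)"
    and "f1 F (x (Suc k)) \<le> psi F J (x k) (Lacc k) (\<tau> k) (x (Suc k))"
    unfolding scheme2_def by blast+
  then show ?thesis
    unfolding tau_ok_def by simp
qed

lemma scheme2_step_bound:
  assumes run: "scheme2 F J X L LF x \<epsilon> Lstart j Lacc \<tau>"
    and "\<mu> > 0" "sigma_min (transpose (Jhat J (x k))) \<ge> sqrt \<mu>" "t \<in> {0..1}"
  shows "f1 F (x (Suc k)) \<le> \<epsilon> k + (1 - t) * f1 F (x k) + Lacc k / 2 * t\<^sup>2 * ((f1 F (x k))\<^sup>2 / \<mu>)"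
proof -
  have "opt_val F J (Lacc k) (x k) \<le> (1 - t) * f1 F (x k) + Lacc k / 2 * t\<^sup>2 * ((f1 F (x k))\<^sup>2 / \<mu>)"
    by (rule opt_val_le_gauss_newton[OF scheme2_Lacc_bounds(1)[OF run] assms(2-4)])
  then show ?thesis
    using scheme2_f1_Suc_le_opt_val[OF run, of k] by linarith
qed

lemma scheme2_decrease:
  assumes run: "scheme2 F J X L LF x \<epsilon> Lstart j Lacc \<tau>"
    and "\<mu> > 0" "sigma_min (transpose (Jhat J (x k))) \<ge> sqrt \<mu>"
    and "M > 0" "Lacc k \<le> 2 * M"
  shows "if f1 F (x k) \<le> \<mu> / (2 * M)
         then f1 F (x (Suc k)) \<le> \<epsilon> k + M / \<mu> * f2 F (x k) \<and> M / \<mu> * f2 F (x k) \<le> f1 F (x k) / 2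
         else f1 F (x (Suc k)) \<le> \<epsilon> k + (f1 F (x k) - \<mu> / (4 * M))"
proof -
  have "f1 F (x (Suc k)) \<le> \<epsilon> k + (1 - t) * f1 F (x k) + M * t\<^sup>2 * ((f1 F (x k))\<^sup>2 / \<mu>)"
    if "t \<in> {0..1}" for t
  proof -
    have "Lacc k / 2 * (t\<^sup>2 * ((f1 F (x k))\<^sup>2 / \<mu>)) \<le> M * (t\<^sup>2 * ((f1 F (x k))\<^sup>2 / \<mu>))"
      using \<open>Lacc k \<le> 2 * M\<close> \<open>\<mu> > 0\<close> by (intro mult_right_mono) simp_all
    then show ?thesis
      using scheme2_step_bound[OF run assms(2,3) that] by (simp add: mult.assoc)
  qed
  moreover have "f1 F (x k) \<ge> 0"
    unfolding f1_def by simp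
  ultimately show ?thesis
    unfolding f2_def using quadratic_model_decrease \<open>\<mu> > 0\<close> \<open>M > 0\<close> by blast
qed

theorem theorem9:
  fixes F :: "real^'n \<Rightarrow> real^'m" and J :: "real^'n \<Rightarrow> real^'n^'m"
    and X :: "real^'n \<Rightarrow> real \<Rightarrow> real \<Rightarrow> real^'n"
    and Fset :: "(real^'n) set"
    and L LF \<mu> :: real
    and x :: "nat \<Rightarrow> real^'n" and \<epsilon> Lstart Lacc \<tau> :: "nat \<Rightarrow> real" and j :: "nat \<Rightarrow> nat"
  assumes deriv: "\<forall>z. (F has_derivative (\<lambda>h. J z *v h)) (at z)"
    and Fset: "closed Fset" "convex Fset" "interior Fset \<noteq> {}"
    and level: "{z. f1 F z \<le> f1 F (x 0)} \<subseteq> Fset"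
    and stays: "\<forall>k. x k \<in> Fset"
    and lip: "\<forall>y\<in>Fset. \<forall>z\<in>Fset. frob_norm (Jhat J y - Jhat J z) \<le> LF * norm (y - z)"
    and mu: "\<mu> > 0" "\<forall>z\<in>Fset. sigma_min (transpose (Jhat J z)) \<ge> sqrt \<mu>"
    and run: "scheme2 F J X L LF x \<epsilon> Lstart j Lacc \<tau>"
  shows "(\<forall>k. if f1 F (x k) \<le> \<mu> / (2 * LF)
              then f1 F (x (Suc k)) \<le> \<epsilon> k + LF / \<mu> * f2 F (x k)
                   \<and> LF / \<mu> * f2 F (x k) \<le> f1 F (x k) / 2
              else f1 F (x (Suc k)) \<le> \<epsilon> k + (f1 F (x k) - \<mu> / (4 * LF)))
       \<and> ((\<forall>k. Lacc k = LF) \<longrightarrow>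
          (\<forall>k. if f1 F (x k) \<le> \<mu> / LF
              then f1 F (x (Suc k)) \<le> \<epsilon> k + LF / (2 * \<mu>) * f2 F (x k)
                   \<and> LF / (2 * \<mu>) * f2 F (x k) \<le> f1 F (x k) / 2
              else f1 F (x (Suc k)) \<le> \<epsilon> k + (f1 F (x k) - \<mu> / (2 * LF))))"
proof -
  have sigma: "sigma_min (transpose (Jhat J (x k))) \<ge> sqrt \<mu>" for k
    using mu(2) stays by blast
  have "0 < LF"
    using scheme2_Lacc_bounds[OF run, of 0] by simp
  have halved: "2 * (LF / 2) = LF" "LF / 2 / \<mu> = LF / (2 * \<mu>)" "4 * (LF / 2) = 2 * LF"
    by simp_all
  have "Lacc k \<le> 2 * (LF / 2)" if "\<forall>k. Lacc k = LF" for k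
    using that by simp
  then show ?thesis
    using scheme2_decrease[OF run mu(1) sigma \<open>0 < LF\<close> scheme2_Lacc_bounds(2)[OF run]]
      scheme2_decrease[OF run mu(1) sigma half_gt_zero[OF \<open>0 < LF\<close>]]
    unfolding halved by blast
qed

end
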